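(* Let $k\ge1$ and let $p=(p_1,\dots,p_n)$ be a parking function. Then the permutation $\pi(p)$ avoids the pattern $(k+1)k\cdots1$ if and only if the word $p_1\cdots p_n$ avoids $(k+1)k\cdots 1$ as a word, i.e. there are no indices $i_1<\dots<i_{k+1}$ with $p_{i_1}>p_{i_2}>\dots>p_{i_{k+1}}$.
   Context: $[n]=\{1,\dots,n\}$. A tuple $p\in[n]^n$ is a parking function if its weakly increasing rearrangement $(p'_1,\dots,p'_n)$ satisfies $p'_i\le i$ for all $i$. $\pi(p)$ is the permutation obtained by listing, for $s=1,\dots,n$ in turn, the indices $j$ with $p_j=s$ in increasing order, and concatenating. A permutation avoids $\sigma\in\mathfrak S_m$ if none of its length-$m$ subsequences is order-isomorphic to $\sigma$. *)

theory Defs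
  imports Main "HOL-Library.Sublist"
begin

text \<open>A tuple p in [n]^n is represented as a list of length n; p_i is p ! (i - 1).\<close>

definition parking_function :: "nat list \<Rightarrow> bool" where
  "parking_function p \<longleftrightarrow>
     (\<forall>x \<in> set p. 1 \<le> x \<and> x \<le> length p) \<and>
     (\<forall>i < length p. sort p ! i \<le> i + 1)"

definition perm_of_pf :: "nat list \<Rightarrow> nat list" where
  "perm_of_pf p = concat (map (\<lambda>s. filter (\<lambda>j. p ! (j - 1) = s) [1..<length p + 1])
                              [1..<length p + 1])"

definition order_iso :: "nat list \<Rightarrow> nat list \<Rightarrow> bool" where
  "order_iso xs ys \<longleftrightarrow> length xs = length ys \<and>
     (\<forall>i < length xs. \<forall>j < length xs. (xs ! i < xs ! j \<longleftrightarrow> ys ! i < ys ! j))"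

definition avoids :: "nat list \<Rightarrow> nat list \<Rightarrow> bool" where
  "avoids w \<sigma> \<longleftrightarrow> \<not> (\<exists>ys. subseq ys w \<and> length ys = length \<sigma> \<and> order_iso ys \<sigma>)"

definition dec_pattern :: "nat \<Rightarrow> nat list" where
  "dec_pattern k = rev [1..<k + 2]"

end

(* pi(p) lists the positions j sorted by the lexicographic key (p_j, j), so the sublists of
   pi(p) are exactly the sets of positions listed in increasing key order. Such a sublist is
   decreasing in the positions iff p strictly increases along it; read backwards, it is a
   sequence of positions i_1 < ... < i_(k+1) with p_(i_1) > ... > p_(i_(k+1)). The parking
   condition only serves to make every position 1..n occur in pi(p). *)

theory Submission
  imports Defs "HOL-Library.Product_Lexorder"
begin

lemma sorted_wrt_subseq:
  "subseq xs ys \<Longrightarrow> sorted_wrt R ys \<Longrightarrow> sorted_wrt R xs"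
  by (induction rule: list_emb.induct) (auto dest: list_emb_set)

lemma sorted_wrt_subset_imp_subseq:
  assumes "set xs \<subseteq> set ys" "sorted_wrt R xs" "sorted_wrt R ys" "asymp R"
  shows "subseq xs ys"
  using assms(1-3)
proof (induction xs arbitrary: ys)
  case Nil
  then show ?case by simp
next
  case (Cons x xs)
  then obtain us vs where ys: "ys = us @ x # vs"
    by (meson list.set_intros(1) split_list subsetD)
  have "set xs \<subseteq> set vs"
  proof
    fix z assume "z \<in> set xs"
    with Cons.prems have "R x z" "z \<in> set ys" by auto
    then have "\<not> R z x" "z \<noteq> x" using assms(4) by (auto dest: asympD)
    with \<open>z \<in> set ys\<close> show "z \<in> set vs"
      using Cons.prems(3) ys by (auto simp: sorted_wrt_append)
  qed
  with Cons have "subseq xs vs" using ys by (simp add: sorted_wrt_append)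
  then show ?case using ys by (simp add: list_emb_append2)
qed

lemma subseq_iff_sorted_wrt:
  assumes "sorted_wrt R ys" "asymp R"
  shows "subseq xs ys \<longleftrightarrow> set xs \<subseteq> set ys \<and> sorted_wrt R xs"
  using assms sorted_wrt_subseq sorted_wrt_subset_imp_subseq
  by (auto dest: list_emb_set)

lemma sorted_wrt_greater_nth_less_iff:
  fixes xs :: "'a::linorder list"
  assumes "sorted_wrt (>) xs" "i < length xs" "j < length xs"
  shows "xs ! i < xs ! j \<longleftrightarrow> j < i"
  using assms unfolding sorted_wrt_iff_nth_less
  by (metis less_asym linorder_neqE_nat)

lemma order_iso_sorted_wrt_greater_iff:
  assumes "sorted_wrt (>) ys"
  shows "order_iso xs ys \<longleftrightarrow> length xs = length ys \<and> sorted_wrt (>) xs"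
proof
  assume "order_iso xs ys"
  then show "length xs = length ys \<and> sorted_wrt (>) xs"
    using assms unfolding order_iso_def sorted_wrt_iff_nth_less by auto
next
  assume "length xs = length ys \<and> sorted_wrt (>) xs"
  then show "order_iso xs ys"
    using assms sorted_wrt_greater_nth_less_iff unfolding order_iso_def by metis
qed

lemma length_dec_pattern: "length (dec_pattern k) = Suc k"
  by (simp add: dec_pattern_def)

lemma sorted_wrt_greater_dec_pattern: "sorted_wrt (>) (dec_pattern k)"
  by (simp add: dec_pattern_def sorted_wrt_rev del: upt_Suc)

lemma avoids_dec_pattern_iff:
  "avoids w (dec_pattern k) \<longleftrightarrow>
     \<not> (\<exists>ys. length ys = Suc k \<and> subseq ys w \<and> sorted_wrt (>) ys)"
  unfolding avoids_def length_dec_pattern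
    order_iso_sorted_wrt_greater_iff[OF sorted_wrt_greater_dec_pattern]
  by auto

lemma sorted_wrt_concat_map_filter:
  fixes f :: "'a::linorder \<Rightarrow> 'b::linorder"
  assumes "sorted_wrt (<) ss" "sorted_wrt (<) xs"
  shows "sorted_wrt (\<lambda>x y. (f x, x) < (f y, y))
           (concat (map (\<lambda>s. filter (\<lambda>x. f x = s) xs) ss))"
  using assms(1)
proof (induction ss)
  case Nil
  then show ?case by simp
next
  case (Cons s ss)
  have "sorted_wrt (\<lambda>x y. (f x, x) < (f y, y)) (filter (\<lambda>x. f x = s) xs)"
    using sorted_wrt_filter[OF assms(2)] by (rule sorted_wrt_mono_rel[rotated]) auto
  with Cons show ?case by (auto simp: sorted_wrt_append)
qed

lemma sorted_wrt_perm_of_pf: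
  "sorted_wrt (\<lambda>x y. (p ! (x - 1), x) < (p ! (y - 1), y)) (perm_of_pf p)"
  unfolding perm_of_pf_def
  by (rule sorted_wrt_concat_map_filter) (simp_all only: sorted_wrt_upt)

lemma set_perm_of_pf:
  assumes "parking_function p"
  shows "set (perm_of_pf p) = {1..length p}"
proof -
  have "p ! (j - 1) \<in> {1..length p}" if "j \<in> {1..length p}" for j
    using assms that unfolding parking_function_def by auto
  then show ?thesis unfolding perm_of_pf_def by (fastforce simp del: upt_Suc)
qed

lemma decreasing_subseq_perm_of_pf_iff:
  assumes "parking_function p"
  shows "subseq ys (perm_of_pf p) \<and> sorted_wrt (>) ys \<longleftrightarrow>
    set ys \<subseteq> {1..length p} \<and> sorted_wrt (\<lambda>a b. b < a \<and> p ! (a - 1) < p ! (b - 1)) ys"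
proof -
  let ?key_less = "\<lambda>x y. (p ! (x - 1), x) < (p ! (y - 1), y)"
  have "asymp ?key_less"
    by (rule asympI) auto
  then have "subseq ys (perm_of_pf p) \<longleftrightarrow> set ys \<subseteq> {1..length p} \<and> sorted_wrt ?key_less ys"
    using subseq_iff_sorted_wrt[OF sorted_wrt_perm_of_pf] set_perm_of_pf[OF assms] by simp
  moreover have "sorted_wrt ?key_less ys \<and> sorted_wrt (>) ys \<longleftrightarrow>
      sorted_wrt (\<lambda>a b. b < a \<and> p ! (a - 1) < p ! (b - 1)) ys"
    by (induction ys) fastforce+
  ultimately show ?thesis
    by blast
qed

lemma sorted_wrt_map_upt_Suc_iff:
  assumes "transp R"
  shows "sorted_wrt R (map f [0..<Suc k]) \<longleftrightarrow> (\<forall>j<k. R (f j) (f (Suc j)))"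
  by (auto simp: sorted_wrt_iff_nth_Suc_transp[OF assms] nth_append simp del: upt_Suc)

lemma ex_chain_iff_ex_sorted_wrt:
  fixes R :: "'a::linorder \<Rightarrow> 'a \<Rightarrow> bool"
  assumes "transp R" and R_less: "\<And>a b. R a b \<Longrightarrow> a < b"
  shows "(\<exists>i. lo \<le> i 0 \<and> i k \<le> hi \<and> (\<forall>j<k. R (i j) (i (Suc j)))) \<longleftrightarrow>
    (\<exists>xs. length xs = Suc k \<and> set xs \<subseteq> {lo..hi} \<and> sorted_wrt R xs)"
proof
  assume "\<exists>i. lo \<le> i 0 \<and> i k \<le> hi \<and> (\<forall>j<k. R (i j) (i (Suc j)))"
  then obtain i where bounds: "lo \<le> i 0" "i k \<le> hi" and "\<forall>j<k. R (i j) (i (Suc j))"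
    by blast
  then have chain: "sorted_wrt R (map i [0..<Suc k])"
    using sorted_wrt_map_upt_Suc_iff[OF assms(1)] by blast
  then have "sorted (map i [0..<Suc k])"
    using R_less by (auto intro: strict_sorted_imp_sorted sorted_wrt_mono_rel)
  then have "i 0 \<le> i j \<and> i j \<le> i k" if "j < Suc k" for j
    using that sorted_nth_mono[of "map i [0..<Suc k]" 0 j] sorted_nth_mono[of "map i [0..<Suc k]" j k]
    by (simp add: nth_append del: upt_Suc)
  then have "set (map i [0..<Suc k]) \<subseteq> {lo..hi}"
    using bounds by (fastforce simp del: upt_Suc intro: order_trans)
  with chain show "\<exists>xs. length xs = Suc k \<and> set xs \<subseteq> {lo..hi} \<and> sorted_wrt R xs"
    by (metis diff_zero length_map length_upt)
next
  assume "\<exists>xs. length xs = Suc k \<and> set xs \<subseteq> {lo..hi} \<and> sorted_wrt R xs"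
  then obtain xs where xs: "length xs = Suc k" "set xs \<subseteq> {lo..hi}" "sorted_wrt R xs"
    by blast
  then have "map ((!) xs) [0..<Suc k] = xs"
    by (metis map_nth)
  with xs have "\<forall>j<k. R (xs ! j) (xs ! Suc j)"
    using sorted_wrt_map_upt_Suc_iff[OF assms(1), of "(!) xs" k] by simp
  moreover have "xs ! 0 \<in> {lo..hi}" "xs ! k \<in> {lo..hi}"
    using subsetD[OF xs(2) nth_mem] xs(1) by simp_all
  ultimately show "\<exists>i. lo \<le> i 0 \<and> i k \<le> hi \<and> (\<forall>j<k. R (i j) (i (Suc j)))"
    by (intro exI[of _ "(!) xs"]) simp
qed

theorem corollary2p10:
  fixes k :: nat and p :: "nat list"
  assumes "k \<ge> 1" and "parking_function p"
  shows "avoids (perm_of_pf p) (dec_pattern k) \<longleftrightarrow>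
    \<not> (\<exists>i :: nat \<Rightarrow> nat.
          1 \<le> i 0 \<and> i k \<le> length p \<and>
          (\<forall>j < k. i j < i (Suc j) \<and> p ! (i j - 1) > p ! (i (Suc j) - 1)))"
proof -
  let ?R = "\<lambda>a b. a < b \<and> p ! (b - 1) < p ! (a - 1)"
  have ex_rev_iff: "(\<exists>ys. P ys) \<longleftrightarrow> (\<exists>xs. P (rev xs))" for P :: "nat list \<Rightarrow> bool"
    by (metis rev_rev_ident)
  have "avoids (perm_of_pf p) (dec_pattern k) \<longleftrightarrow>
      \<not> (\<exists>ys. length ys = Suc k \<and> subseq ys (perm_of_pf p) \<and> sorted_wrt (>) ys)"
    by (rule avoids_dec_pattern_iff)
  also have "\<dots> \<longleftrightarrow>
      \<not> (\<exists>ys. length ys = Suc k \<and> set ys \<subseteq> {1..length p} \<and> sorted_wrt (\<lambda>a b. ?R b a) ys)"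
    by (simp only: decreasing_subseq_perm_of_pf_iff[OF assms(2)])
  also have "\<dots> \<longleftrightarrow>
      \<not> (\<exists>xs. length xs = Suc k \<and> set xs \<subseteq> {1..length p} \<and> sorted_wrt ?R xs)"
    by (subst ex_rev_iff) (simp only: length_rev set_rev sorted_wrt_rev)
  also have "\<dots> \<longleftrightarrow>
      \<not> (\<exists>i. 1 \<le> i 0 \<and> i k \<le> length p \<and> (\<forall>j<k. ?R (i j) (i (Suc j))))"
    by (subst ex_chain_iff_ex_sorted_wrt) (auto simp: transp_def)
  finally show ?thesis .
qed

end
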